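(* Let $(X,d,\mu)$ be a metric measure space satisfying $\mathrm{BG}(k,n)$ with constant $C=1$ for some $k\in\mathbb{R}$ and $n\ge1$. Then $\mu(S_r(x))=0$ for all $x\in X$ and all $r>0$, where $S_r(x)=\{y\in X: d(x,y)=r\}$. In particular, if $X$ does not consist of a single point, then $\mu(\{x\})=0$ for all $x\in X$.
   Context: A metric measure space $(X,d,\mu)$ means a complete, locally compact length space $(X,d)$ equipped with a Borel measure $\mu$. $B_r(x)$ and $\overline B_r(x)$ denote the open and closed balls of radius $r$ about $x$. For $k\in\mathbb{R}$ let $\mathsf s_k(t)=\sin(\sqrt{k}\,t)/\sqrt{k}$ if $k>0$, $\mathsf s_k(t)=t$ if $k=0$, $\mathsf s_k(t)=\sinh(\sqrt{-k}\,t)/\sqrt{-k}$ if $k<0$. For real $n\ge1$ and $0\le r_1<r_2$ set $V_{k,n}(r_1,r_2)=\alpha_{n-1}\int_{r_1}^{r_2}\mathsf s_k(t)^{n-1}\,dt$ with $\alpha_{n-1}=2\pi^{n/2}/\Gamma(n/2)$. For $x\in X$ let $A_{r_1,r_2}(x)=B_{r_2}(x)\setminus\overline B_{r_1}(x)$ and $A_{0,r}(x)=B_r(x)$. For a measurable $U\subset A_{r_1,r_2}(x)$ and $0\le s_1<s_2$ with $s_1\le r_1$, $s_2\le r_2$, let $S_{s_1,s_2}(x,U)=\{y\in A_{s_1,s_2}(x): d(x,y)+d(y,z)=d(x,z)\text{ for some }z\in U\}$. $(X,d,\mu)$ satisfies $\mathrm{BG}(k,n)$ with constant $C\ge1$ if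 for every $x\in X$, all $0\le r_1<r_2$, $0\le s_1<s_2$ with $s_1\le r_1$, $s_2\le r_2$, and every measurable $U\subset A_{r_1,r_2}(x)$, one has $\mu(U)/\mu(S_{s_1,s_2}(x,U))\le C\,V_{k,n}(r_1,r_2)/V_{k,n}(s_1,s_2)$. *)

theory Defs
  imports "HOL-Analysis.Analysis" "HOL-Probability.Probability"
begin

definition curve_length :: "(real \<Rightarrow> 'a::metric_space) \<Rightarrow> real \<Rightarrow> real \<Rightarrow> ereal" where
  "curve_length \<gamma> a b = (SUP p \<in> {(m, t). t 0 = a \<and> t m = b \<and> (\<forall>i<m. t i \<le> t (Suc i))}.
        ereal (\<Sum>i<fst p. dist (\<gamma> (snd p i)) (\<gamma> (snd p (Suc i)))))"

definition length_space :: "'a::metric_space itself \<Rightarrow> bool" where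
  "length_space _ \<longleftrightarrow> (\<forall>x y::'a. ereal (dist x y) =
      (INF \<gamma> \<in> {\<gamma>. continuous_on {0..1} \<gamma> \<and> \<gamma> 0 = x \<and> \<gamma> 1 = y}. curve_length \<gamma> 0 1))"

definition sk :: "real \<Rightarrow> real \<Rightarrow> real" where
  "sk k t = (if k > 0 then sin (sqrt k * t) / sqrt k
             else if k = 0 then t else sinh (sqrt (- k) * t) / sqrt (- k))"

(* s_k(t)^(n-1); base clipped at 0 so that the real power is defined, and x^0 = 1 *)
definition sk_pow :: "real \<Rightarrow> real \<Rightarrow> real \<Rightarrow> real" where
  "sk_pow k n t = (if n = 1 then 1 else (max 0 (sk k t)) powr (n - 1))"

definition alpha :: "real \<Rightarrow> real" where
  "alpha n = 2 * pi powr (n / 2) / Gamma (n / 2)"   (* this is alpha_{n-1} *)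

definition Vkn :: "real \<Rightarrow> real \<Rightarrow> real \<Rightarrow> real \<Rightarrow> real" where
  "Vkn k n r1 r2 = alpha n * integral {r1..r2} (\<lambda>t. sk_pow k n t)"

definition annulus :: "'a::metric_space \<Rightarrow> real \<Rightarrow> real \<Rightarrow> 'a set" where
  "annulus x r1 r2 = (if r1 = 0 then ball x r2 else ball x r2 - cball x r1)"

definition Sset :: "'a::metric_space \<Rightarrow> real \<Rightarrow> real \<Rightarrow> 'a set \<Rightarrow> 'a set" where
  "Sset x s1 s2 U = {y \<in> annulus x s1 s2. \<exists>z\<in>U. dist x y + dist y z = dist x z}"

(* outer measure (S need not be Borel) *)
definition outer_mu :: "'a measure \<Rightarrow> 'a set \<Rightarrow> ennreal" where
  "outer_mu M A = (INF B \<in> {B \<in> sets M. A \<subseteq> B}. emeasure M B)"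

(* BG(k,n) with constant C; the ratio inequality mu(U)/mu(S) <= C V(r)/V(s) written multiplied out *)
definition BG :: "'a::metric_space measure \<Rightarrow> real \<Rightarrow> real \<Rightarrow> real \<Rightarrow> bool" where
  "BG M k n C \<longleftrightarrow> (\<forall>x r1 r2 s1 s2 U. 0 \<le> r1 \<longrightarrow> r1 < r2 \<longrightarrow> 0 \<le> s1 \<longrightarrow> s1 < s2 \<longrightarrow>
      s1 \<le> r1 \<longrightarrow> s2 \<le> r2 \<longrightarrow> U \<in> sets M \<longrightarrow> U \<subseteq> annulus x r1 r2 \<longrightarrow>
      emeasure M U * ennreal (Vkn k n s1 s2) \<le> ennreal (C * Vkn k n r1 r2) * outer_mu M (Sset x s1 s2 U))"

end

theory Submission
  imports Defs
begin

text \<open>Apply BG(k,n) with \<open>C = 1\<close> to \<open>U = B\<^sub>\<rho>(x)\<close> and \<open>(s\<^sub>1,s\<^sub>2) = (0,r)\<close> for \<open>\<rho> > r\<close>: every point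
  of \<open>S\<^sub>0\<^sub>,\<^sub>r(x,U)\<close> lies in \<open>B\<^sub>r(x)\<close>, so
  \<open>(\<mu>(B\<^sub>r(x)) + \<mu>(S\<^sub>r(x))) V(0,r) \<le> \<mu>(B\<^sub>\<rho>(x)) V(0,r) \<le> V(0,\<rho>) \<mu>(B\<^sub>r(x))\<close>.
  Letting \<open>\<rho> \<down> r\<close> and using continuity and positivity of \<open>V(0,\<cdot>)\<close> together with finiteness of
  \<open>\<mu>(B\<^sub>r(x))\<close> forces \<open>\<mu>(S\<^sub>r(x)) = 0\<close>. A point \<open>x\<close> lies on the sphere of radius \<open>d(y,x) > 0\<close> about any
  other point \<open>y\<close>.\<close>

lemma continuous_on_sk: "continuous_on A (sk k)"
  by (cases "k > 0"; cases "k = 0") (simp_all add: sk_def continuous_intros)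

lemma continuous_on_sk_pow:
  assumes "n \<ge> 1" shows "continuous_on A (sk_pow k n)"
proof (cases "n = 1")
  case False
  with assms have "continuous_on A (\<lambda>t. (max 0 (sk k t)) powr (n - 1))"
    by (intro continuous_on_powr' continuous_on_max continuous_on_const continuous_on_sk) auto
  with False show ?thesis unfolding sk_pow_def by simp
qed (simp add: sk_pow_def)

lemma sk_pow_nonneg: "sk_pow k n t \<ge> 0"
  unfolding sk_pow_def by simp

lemma sk_pow_pos: "sk k t > 0 \<Longrightarrow> sk_pow k n t > 0"
  unfolding sk_pow_def by auto

lemma sk_pos_below:
  assumes "r > 0" obtains t where "0 < t" "t < r" "sk k t > 0"
proof -
  consider "k > 0" | "k = 0" | "k < 0" by linarith
  then have "\<exists>t. 0 < t \<and> t < r \<and> sk k t > 0"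
  proof cases
    case 1
    define m where "m = min r (pi / sqrt k)"
    define t where "t = m / 2"
    have "0 < m" "m \<le> r" "m \<le> pi / sqrt k"
      using 1 assms unfolding m_def by auto
    then have t: "0 < t" "t < r" "t < pi / sqrt k"
      unfolding t_def by linarith+
    then have "0 < sqrt k * t" "sqrt k * t < pi"
      using 1 by (simp_all add: field_simps)
    then have "sin (sqrt k * t) > 0" by (rule sin_gt_zero)
    with t 1 show ?thesis by (intro exI[of _ t]) (auto simp: sk_def)
  next
    case 2
    with assms show ?thesis by (intro exI[of _ "r/2"]) (auto simp: sk_def)
  next
    case 3
    with assms show ?thesis by (intro exI[of _ "r/2"]) (auto simp: sk_def sinh_real_pos_iff)
  qed
  with that show thesis by blast
qed

lemma alpha_pos: "n > 0 \<Longrightarrow> alpha n > 0"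
  unfolding alpha_def by (intro divide_pos_pos) auto

lemma Vkn_pos:
  assumes "n \<ge> 1" "r > 0" shows "Vkn k n 0 r > 0"
proof -
  obtain t where t: "0 < t" "t < r" "sk k t > 0"
    using sk_pos_below[OF assms(2)] .
  have cont: "continuous_on {0..r} (sk_pow k n)"
    using assms(1) by (rule continuous_on_sk_pow)
  have int: "sk_pow k n integrable_on {0..r}"
    using cont by (rule integrable_continuous_real)
  have closure: "closure {0<..<r} = {0..r}"
    using assms(2) by simp
  have "integral {0..r} (sk_pow k n) \<noteq> 0"
  proof
    assume "integral {0..r} (sk_pow k n) = 0"
    then have "(sk_pow k n has_integral 0) (closure {0<..<r})"
      using integrable_integral[OF int] by (simp add: closure)
    then have "sk_pow k n t = 0"
      using has_integral_0_closure_imp_0[of "{0<..<r}" "sk_pow k n"] t cont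
      by (auto simp: sk_pow_nonneg closure)
    with sk_pow_pos[OF t(3), of n] show False by simp
  qed
  moreover have "integral {0..r} (sk_pow k n) \<ge> 0"
    using int by (intro integral_nonneg sk_pow_nonneg)
  ultimately show ?thesis
    using alpha_pos[of n] assms(1) unfolding Vkn_def by simp
qed

lemma Vkn_tendsto_at_right:
  assumes "n \<ge> 1" "r \<ge> 0" shows "(Vkn k n 0 \<longlongrightarrow> Vkn k n 0 r) (at_right r)"
proof -
  have "sk_pow k n integrable_on {0..r+1}"
    using assms(1) by (intro integrable_continuous_real continuous_on_sk_pow)
  then have "continuous_on {0..r+1} (\<lambda>\<rho>. integral {0..\<rho>} (sk_pow k n))"
    by (rule indefinite_integral_continuous_1)
  then have "((\<lambda>\<rho>. integral {0..\<rho>} (sk_pow k n)) \<longlongrightarrow> integral {0..r} (sk_pow k n))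
      (at r within {0..r+1})"
    using assms(2) by (simp add: continuous_on_def)
  then have "((\<lambda>\<rho>. integral {0..\<rho>} (sk_pow k n)) \<longlongrightarrow> integral {0..r} (sk_pow k n))
      (at r within {r..r+1})"
    by (rule tendsto_within_subset) (use assms(2) in auto)
  then have "((\<lambda>\<rho>. integral {0..\<rho>} (sk_pow k n)) \<longlongrightarrow> integral {0..r} (sk_pow k n)) (at_right r)"
    using at_within_Icc_at_right[of r "r+1"] by simp
  then show ?thesis
    unfolding Vkn_def by (intro tendsto_mult tendsto_const)
qed

lemma BG_ball_le:
  assumes "sets M = sets borel" "BG M k n C" "0 < r" "r < \<rho>"
  shows "emeasure M (ball x \<rho>) * ennreal (Vkn k n 0 r) \<le> ennreal (C * Vkn k n 0 \<rho>) * emeasure M (ball x r)"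
proof -
  have balls: "ball x s \<in> sets M" for s
    using assms(1) by simp
  have "emeasure M (ball x \<rho>) * ennreal (Vkn k n 0 r)
        \<le> ennreal (C * Vkn k n 0 \<rho>) * outer_mu M (Sset x 0 r (ball x \<rho>))"
    using assms(2)[unfolded BG_def, rule_format, of 0 \<rho> 0 r "ball x \<rho>" x] assms(3,4) balls
    by (simp add: annulus_def)
  also have "outer_mu M (Sset x 0 r (ball x \<rho>)) \<le> emeasure M (ball x r)"
    unfolding outer_mu_def using balls by (intro INF_lower) (auto simp: Sset_def annulus_def)
  finally show ?thesis
    by (simp add: mult_left_mono)
qed

lemma emeasure_ball_plus_sphere_le:
  assumes "sets M = sets borel" "r < \<rho>"
  shows "emeasure M (ball x r) + emeasure M {y. dist x y = r} \<le> emeasure M (ball x \<rho>)"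
proof -
  have sphere: "{y. dist x y = r} \<in> sets M"
    using assms(1) by (simp add: borel_closed closed_Collect_eq continuous_intros)
  have "emeasure M (ball x r) + emeasure M {y. dist x y = r} = emeasure M (ball x r \<union> {y. dist x y = r})"
    using assms(1) sphere by (intro plus_emeasure) auto
  also have "\<dots> \<le> emeasure M (ball x \<rho>)"
    using assms by (intro emeasure_mono) auto
  finally show ?thesis .
qed

lemma eq_0_if_tendsto_bound:
  fixes a b v :: real and V :: "real \<Rightarrow> real"
  assumes "0 \<le> a" "0 \<le> b" "0 < v" "(V \<longlongrightarrow> v) (at_right r)"
    and "\<And>\<rho>. r < \<rho> \<Longrightarrow> (a + b) * v \<le> V \<rho> * a"
  shows "b = 0"
proof -
  have "(a + b) * v \<le> v * a"
  proof (rule tendsto_le[of "at_right r"])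
    show "\<forall>\<^sub>F \<rho> in at_right r. (a + b) * v \<le> V \<rho> * a"
      using eventually_at_right_less[of r] by (rule eventually_mono) (rule assms(5))
  qed (use assms(4) in \<open>auto intro: tendsto_mult\<close>)
  with assms(1-3) show ?thesis
    by (simp add: algebra_simps mult_le_0_iff)
qed

lemma BG1_emeasure_sphere_eq_0:
  assumes "sets M = sets borel" "\<And>x r. emeasure M (ball x r) < \<infinity>" "n \<ge> 1" "BG M k n 1" "r > 0"
  shows "emeasure M {y. dist x y = r} = 0"
proof -
  define a where "a = measure M (ball x r)"
  define b where "b = measure M {y. dist x y = r}"
  have "emeasure M {y. dist x y = r} \<le> emeasure M (ball x r) + emeasure M {y. dist x y = r}"
    by simp
  also have "\<dots> \<le> emeasure M (ball x (r + 1))"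
    using emeasure_ball_plus_sphere_le[OF assms(1)] by simp
  also have "\<dots> < \<infinity>"
    using assms(2) .
  finally have sphere_finite: "emeasure M {y. dist x y = r} < \<infinity>" .
  have ea: "emeasure M (ball x r) = ennreal a"
    unfolding a_def using assms(2)[of x r] by (intro emeasure_eq_ennreal_measure) auto
  have eb: "emeasure M {y. dist x y = r} = ennreal b"
    unfolding b_def using sphere_finite by (intro emeasure_eq_ennreal_measure) auto
  have "b = 0"
  proof (rule eq_0_if_tendsto_bound)
    show "0 \<le> a" "0 \<le> b" unfolding a_def b_def by auto
    show "0 < Vkn k n 0 r" using Vkn_pos assms(3,5) .
    show "(Vkn k n 0 \<longlongrightarrow> Vkn k n 0 r) (at_right r)"
      using Vkn_tendsto_at_right assms(3,5) by simp
    show "(a + b) * Vkn k n 0 r \<le> Vkn k n 0 \<rho> * a" if "r < \<rho>" for \<rho>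
    proof -
      have "ennreal (a + b) * ennreal (Vkn k n 0 r) \<le> emeasure M (ball x \<rho>) * ennreal (Vkn k n 0 r)"
        using emeasure_ball_plus_sphere_le[OF assms(1) that, of x] ea eb \<open>0 \<le> a\<close> \<open>0 \<le> b\<close>
        by (intro mult_right_mono) (auto simp: ennreal_plus)
      also have "\<dots> \<le> ennreal (Vkn k n 0 \<rho>) * ennreal a"
        using BG_ball_le[OF assms(1,4,5) that, of x] ea by simp
      finally have "ennreal ((a + b) * Vkn k n 0 r) \<le> ennreal (Vkn k n 0 \<rho> * a)"
        using \<open>0 \<le> a\<close> \<open>0 \<le> b\<close> \<open>0 < Vkn k n 0 r\<close> Vkn_pos[OF assms(3), of \<rho> k] assms(5) that
        by (simp add: ennreal_mult ennreal_plus)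
      then show ?thesis
        using \<open>0 \<le> a\<close> Vkn_pos[OF assms(3), of \<rho> k] assms(5) that by (simp add: ennreal_le_iff)
    qed
  qed
  with eb show ?thesis by simp
qed

theorem lemma3p6:
  fixes M :: "'a::{metric_space, complete_space} measure" and k n :: real
  assumes "locally compact (UNIV :: 'a set)"
    and "length_space TYPE('a)"
    and "sets M = sets borel"
    and "\<And>x r. emeasure M (ball x r) < \<infinity>"
    and "n \<ge> 1"
    and "BG M k n 1"
  shows "(\<forall>x r. r > 0 \<longrightarrow> emeasure M {y. dist x y = r} = 0) \<and>
         ((\<exists>a b::'a. a \<noteq> b) \<longrightarrow> (\<forall>x. emeasure M {x} = 0))"
proof -
  have spheres: "emeasure M {y. dist x y = r} = 0" if "r > 0" for x r
    using BG1_emeasure_sphere_eq_0[OF assms(3-6) that] .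
  moreover have "emeasure M {x} = 0" if nontrivial: "\<exists>a b::'a. a \<noteq> b" for x
  proof -
    obtain y where "y \<noteq> x" using nontrivial by metis
    have "emeasure M {x} \<le> emeasure M {z. dist y z = dist y x}"
      using assms(3) by (intro emeasure_mono) (auto simp: borel_closed closed_Collect_eq continuous_intros)
    also have "\<dots> = 0"
      using spheres \<open>y \<noteq> x\<close> by simp
    finally show ?thesis by simp
  qed
  ultimately show ?thesis by blast
qed

end
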